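(* Let $\mathcal{X}$ be a triangulation of $(S,\overline{M_n})$ and let $\mathcal{Y}$ be the mutation of $\mathcal{X}$ at an arc $X\in\mathcal{X}$, i.e. $\mathcal{Y}$ is a triangulation with $\mathcal{Y}=(\mathcal{X}\setminus\{X\})\cup\{Y\}$ for a unique arc $Y\neq X$. If $\mathcal{X}$ is rigid then $\mathcal{Y}$ is rigid; and if $\mathcal{X}$ is a fan triangulation then $\mathcal{Y}$ is a fan triangulation.
   Context: $\overline{\mathcal{C}_n}$ is the completed discrete cluster category of Dynkin type $\mathbb{A}$ (Paquette–Yıldırım) with geometric model $(S,\overline{M_n})$: $S$ a disc, $M_n$ an infinite discrete set of marked points on $\partial S$ with $n\ge1$ two-sided accumulation points, $\overline{M_n}$ = $M_n$ with the accumulation points added. It is a triangulated category with suspension $\Sigma$ whose indecomposables correspond to arcs between non-neighbouring points of $\overline{M_n}$; for indecomposables $A,C$, $\overline{\mathcal{C}_n}(C,\Sigma A)\ne0$ exactly if (i) $A,C$ cross transversely, or (ii) $A\ne C$ share exactly one accumulation point $p$ and the other endpoint of $C$ moves anticlockwise to the other endpoint of $A$ without passing $p$, or (iii) $A=C$ with both endpoints accumulation points. A set of arcs is identified with the additive subcategory it generates; it is rigid if $\overline{\mathcal{C}_n}(\mathcal{X},\Sigma\mathcal{X})=0$. A triangulation is a maximal set of pairwise non-transversely-crossing arcs; an infinite leapfrog is two sets of arcs $\{A_i\}_{i\in I}$, $\{B_i\}_{i\in I}$, $I\in\{\mathbb{Z},\mathbb{Z}_{\le0},\mathbb{Z}_{\ge0}\}$,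 all distinct and pairwise non-crossing, each $A_i$ incident with an endpoint of $B_i$ and (if $i-1\in I$) of $B_{i-1}$, each $B_i$ incident with an endpoint of $A_i$ and (if $i+1\in I$) of $A_{i+1}$, with a curve in $S$ crossing all of them; a fan triangulation is a triangulation with no infinite leapfrog. *)

theory Defs
  imports "HOL-Analysis.Analysis"
begin

text \<open>S is the closed unit disc in the complex plane.  The set of marked
points with the accumulation points added is modelled by the datatype below:
Acc k (k < n) is the k-th accumulation point, and Pt k z (k < n, z an integer)
are the marked points strictly between Acc k and Acc (k+1 mod n), ordered
anticlockwise by z.  They are placed on the unit circle at explicit angles;
anticlockwise means increasing angle.\<close>

datatype mpt = Acc nat | Pt nat int

definition frac_pos :: "int \<Rightarrow> real" where
  "frac_pos z = 1/2 + real_of_int z / (2 * (1 + \<bar>real_of_int z\<bar>))"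

fun ang :: "nat \<Rightarrow> mpt \<Rightarrow> real" where
  "ang n (Acc k) = 2 * pi * real k / real n"
| "ang n (Pt k z) = 2 * pi * (real k + frac_pos z) / real n"

definition pos :: "nat \<Rightarrow> mpt \<Rightarrow> complex" where
  "pos n p = cis (ang n p)"

fun valid_pt :: "nat \<Rightarrow> mpt \<Rightarrow> bool" where
  "valid_pt n (Acc k) = (k < n)"
| "valid_pt n (Pt k z) = (k < n)"

fun is_acc :: "mpt \<Rightarrow> bool" where
  "is_acc (Acc k) = True"
| "is_acc (Pt k z) = False"

definition neighbours :: "mpt \<Rightarrow> mpt \<Rightarrow> bool" where
  "neighbours p q = (\<exists>k z. (p = Pt k z \<and> q = Pt k (z+1)) \<or> (q = Pt k z \<and> p = Pt k (z+1)))"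

text \<open>cyc n x y z: moving anticlockwise from x one meets y strictly before z.\<close>
definition cyc :: "nat \<Rightarrow> mpt \<Rightarrow> mpt \<Rightarrow> mpt \<Rightarrow> bool" where
  "cyc n x y z = (let a = ang n x; b = ang n y; c = ang n z in
      (a < b \<and> b < c) \<or> (b < c \<and> c < a) \<or> (c < a \<and> a < b))"

text \<open>An arc (up to isotopy) is determined by its unordered pair of endpoints.\<close>
definition is_arc :: "nat \<Rightarrow> mpt set \<Rightarrow> bool" where
  "is_arc n \<alpha> = (\<exists>a b. \<alpha> = {a, b} \<and> a \<noteq> b \<and> valid_pt n a \<and> valid_pt n b
                       \<and> \<not> neighbours a b)"

definition crosses :: "nat \<Rightarrow> mpt set \<Rightarrow> mpt set \<Rightarrow> bool" where
  "crosses n \<alpha> \<beta> = (\<exists>a b c d. \<alpha> = {a, b} \<and> \<beta> = {c, d} \<and> a \<noteq> b \<and> c \<noteq> d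
        \<and> \<alpha> \<inter> \<beta> = {} \<and> (cyc n a c b \<noteq> cyc n a d b))"

text \<open>ext n C A holds iff the space of morphisms C \<rightarrow> \<Sigma> A is nonzero.\<close>
definition ext :: "nat \<Rightarrow> mpt set \<Rightarrow> mpt set \<Rightarrow> bool" where
  "ext n C A =
     (crosses n A C
      \<or> (A \<noteq> C \<and> (\<exists>p c a. A \<inter> C = {p} \<and> is_acc p \<and> C = {p, c} \<and> A = {p, a}
                          \<and> cyc n c a p))
      \<or> (A = C \<and> (\<forall>x\<in>A. is_acc x)))"

definition rigid :: "nat \<Rightarrow> mpt set set \<Rightarrow> bool" where
  "rigid n \<X> = (\<forall>A\<in>\<X>. \<forall>C\<in>\<X>. \<not> ext n C A)"

definition noncrossing :: "nat \<Rightarrow> mpt set set \<Rightarrow> bool" where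
  "noncrossing n \<X> = (\<forall>\<alpha>\<in>\<X>. \<forall>\<beta>\<in>\<X>. \<not> crosses n \<alpha> \<beta>)"

definition triangulation :: "nat \<Rightarrow> mpt set set \<Rightarrow> bool" where
  "triangulation n \<X> = ((\<forall>\<alpha>\<in>\<X>. is_arc n \<alpha>) \<and> noncrossing n \<X>
      \<and> (\<forall>\<alpha>. is_arc n \<alpha> \<and> \<alpha> \<notin> \<X> \<longrightarrow> (\<exists>\<beta>\<in>\<X>. crosses n \<alpha> \<beta>)))"

text \<open>Signed side of the point x with respect to the straight chord through
u and v (positive: to the left of u \<rightarrow> v).\<close>
definition side :: "complex \<Rightarrow> complex \<Rightarrow> complex \<Rightarrow> real" where
  "side u v x = Im (cnj (v - u) * (x - u))"

text \<open>A curve \<gamma> in S crosses the arc {a,b} (realised as a chord) if its start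
and end point lie strictly on opposite sides of the arc.\<close>
definition curve_crosses :: "nat \<Rightarrow> (real \<Rightarrow> complex) \<Rightarrow> mpt set \<Rightarrow> bool" where
  "curve_crosses n \<gamma> \<alpha> = (\<exists>a b. \<alpha> = {a, b} \<and>
      side (pos n a) (pos n b) (pathstart \<gamma>) * side (pos n a) (pos n b) (pathfinish \<gamma>) < 0)"

definition leapfrog :: "nat \<Rightarrow> (int \<Rightarrow> mpt set) \<Rightarrow> (int \<Rightarrow> mpt set) \<Rightarrow> int set \<Rightarrow> bool" where
  "leapfrog n A B I =
    (I \<in> {UNIV, {..0}, {0..}}
     \<and> (\<forall>i\<in>I. is_arc n (A i) \<and> is_arc n (B i))
     \<and> inj_on A I \<and> inj_on B I \<and> A ` I \<inter> B ` I = {}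
     \<and> noncrossing n (A ` I \<union> B ` I)
     \<and> (\<forall>i\<in>I. A i \<inter> B i \<noteq> {})
     \<and> (\<forall>i\<in>I. i - 1 \<in> I \<longrightarrow> A i \<inter> B (i - 1) \<noteq> {} \<and> A i \<inter> B (i - 1) \<noteq> A i \<inter> B i)
     \<and> (\<forall>i\<in>I. i + 1 \<in> I \<longrightarrow> B i \<inter> A (i + 1) \<noteq> {} \<and> B i \<inter> A (i + 1) \<noteq> B i \<inter> A i)
     \<and> (\<exists>\<gamma>. path \<gamma> \<and> path_image \<gamma> \<subseteq> cball 0 1
            \<and> (\<forall>i\<in>I. curve_crosses n \<gamma> (A i) \<and> curve_crosses n \<gamma> (B i))))"

definition fan_triangulation :: "nat \<Rightarrow> mpt set set \<Rightarrow> bool" where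
  "fan_triangulation n \<X> = (triangulation n \<X> \<and>
      \<not> (\<exists>A B I. leapfrog n A B I \<and> A ` I \<union> B ` I \<subseteq> \<X>))"

end

theory Submission
  imports Defs
begin

text \<open>The new arc Y must cross X, so X and Y are the two diagonals of a quadrilateral
whose sides belong to both triangulations: an arc crossing a side would cross a diagonal.
If Y ended at an accumulation point p, the two sides of the quadrilateral at p would be arcs
of \<X> sharing p, and one of them would extend to the other.  So for rigid \<X> the endpoints of
Y are ordinary marked points, and Y only extends to or from arcs it crosses.  For fan
triangulations, an infinite leapfrog in the mutated triangulation contains Y at most once,
and its tail beyond that occurrence is a leapfrog in \<X>.\<close>

definition cycr :: "real \<Rightarrow> real \<Rightarrow> real \<Rightarrow> bool" where
  "cycr a b c \<longleftrightarrow> (a < b \<and> b < c) \<or> (b < c \<and> c < a) \<or> (c < a \<and> a < b)"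

definition separates :: "real \<Rightarrow> real \<Rightarrow> real \<Rightarrow> real \<Rightarrow> bool" where
  "separates a b c d \<longleftrightarrow> c \<notin> {a, b} \<and> d \<notin> {a, b} \<and> cycr a c b \<noteq> cycr a d b"

lemma cycr_total: "distinct [a, b, c] \<Longrightarrow> cycr a b c \<or> cycr b a c"
  unfolding cycr_def by (cases "a < b"; cases "b < c"; cases "a < c") auto

lemma separates_distinct: "separates a b c d \<Longrightarrow> distinct [a, b, c, d]"
  unfolding separates_def cycr_def by auto

lemma separates_commute_left: "separates b a c d \<longleftrightarrow> separates a b c d"
  unfolding separates_def cycr_def insert_iff empty_iff by (smt (z3))

lemma separates_commute_right: "separates a b d c \<longleftrightarrow> separates a b c d"
  unfolding separates_def by auto

text \<open>In a quadrilateral p x q y with diagonals pq and xy, a chord crossing the side px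
crosses one of the diagonals.\<close>

lemma separates_transfer:
  assumes "separates p q x y" "separates p x u v"
  shows "separates x y u v \<or> separates p q u v"
proof -
  have "distinct [p, q, x, y]" "distinct [p, x, u, v]"
    using assms by (blast intro: separates_distinct)+
  with assms show ?thesis
    unfolding separates_def cycr_def distinct.simps list.set insert_iff empty_iff by (smt (z3))
qed

lemma divide_one_plus_abs_strict_mono:
  fixes x y :: real
  assumes "x < y"
  shows "x / (1 + \<bar>x\<bar>) < y / (1 + \<bar>y\<bar>)"
proof (cases "x < 0 \<and> 0 \<le> y")
  case True
  then have "x / (1 + \<bar>x\<bar>) < 0" "0 \<le> y / (1 + \<bar>y\<bar>)"
    by (simp_all add: divide_neg_pos add_pos_nonneg)
  then show ?thesis by linarith
next
  case False
  with assms have "x * (1 + \<bar>y\<bar>) < y * (1 + \<bar>x\<bar>)"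
    by (auto simp: algebra_simps)
  then show ?thesis by (simp add: field_simps add_pos_nonneg)
qed

lemma frac_pos_eq: "frac_pos z = 1/2 + (real_of_int z / (1 + \<bar>real_of_int z\<bar>)) / 2"
  by (simp add: frac_pos_def)

lemma frac_pos_strict_mono: "strict_mono frac_pos"
proof (rule strict_monoI)
  fix z w :: int assume "z < w"
  then have "real_of_int z < real_of_int w" by simp
  from divide_one_plus_abs_strict_mono[OF this] show "frac_pos z < frac_pos w"
    unfolding frac_pos_eq by (intro add_strict_left_mono divide_strict_right_mono) simp_all
qed

lemma frac_pos_bounds: "0 < frac_pos z" "frac_pos z < 1"
proof -
  define g where "g = real_of_int z / (1 + \<bar>real_of_int z\<bar>)"
  have "\<bar>real_of_int z\<bar> < 1 + \<bar>real_of_int z\<bar>" by simp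
  then have "\<bar>g\<bar> < 1"
    unfolding g_def by (simp add: abs_divide add_pos_nonneg)
  moreover have "frac_pos z = 1/2 + g/2" unfolding g_def frac_pos_eq ..
  ultimately show "0 < frac_pos z" "frac_pos z < 1" by (simp_all add: abs_less_iff)
qed

fun rank :: "mpt \<Rightarrow> real" where
  "rank (Acc k) = real k"
| "rank (Pt k z) = real k + frac_pos z"

lemma ang_eq_rank: "ang n p = 2 * pi * rank p / real n"
  by (cases p) simp_all

lemma floor_rank_Pt: "\<lfloor>rank (Pt k z)\<rfloor> = int k"
  using frac_pos_bounds[of z] by (simp add: floor_eq_iff)

lemma rank_Acc_neq_Pt: "real k \<noteq> real l + frac_pos w"
proof
  assume eq: "real k = real l + frac_pos w"
  then have "int k = int l" using floor_rank_Pt[of l w] by (metis floor_of_nat rank.simps(2))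
  then show False using eq frac_pos_bounds(1)[of w] by simp
qed

lemma inj_rank: "inj rank"
proof (rule injI)
  fix p q assume eq: "rank p = rank q"
  show "p = q"
  proof (cases p; cases q)
    fix k z l w assume p: "p = Pt k z" and q: "q = Pt l w"
    have "int k = int l" using eq floor_rank_Pt by (metis p q)
    then show ?thesis
      using eq p q strict_mono_eq[OF frac_pos_strict_mono] by simp
  qed (use eq rank_Acc_neq_Pt in \<open>auto dest: sym\<close>)
qed

text \<open>For n = 0 the angle map is constantly 0, as division by zero yields 0.\<close>

lemma inj_ang: "n \<ge> 1 \<Longrightarrow> inj (ang n)"
  by (rule injI) (simp add: ang_eq_rank injD[OF inj_rank])

lemma cyc_eq_cycr: "cyc n x y z = cycr (ang n x) (ang n y) (ang n z)"
  by (simp add: cyc_def cycr_def Let_def)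

lemma crosses_iff_separates:
  assumes "n \<ge> 1"
  shows "crosses n {a, b} {c, d} \<longleftrightarrow> separates (ang n a) (ang n b) (ang n c) (ang n d)"
proof
  assume "crosses n {a, b} {c, d}"
  then obtain a' b' c' d' where ab: "{a, b} = {a', b'}" and cd: "{c, d} = {c', d'}"
    and ne: "a' \<noteq> b'" "c' \<noteq> d'" "{a, b} \<inter> {c, d} = {}"
    and cyc: "cyc n a' c' b' \<noteq> cyc n a' d' b'"
    unfolding crosses_def by blast
  have "separates (ang n a') (ang n b') (ang n c') (ang n d')"
    using ab cd ne cyc inj_ang[OF assms] unfolding separates_def cyc_eq_cycr
    by (auto dest: injD)
  with ab cd show "separates (ang n a) (ang n b) (ang n c) (ang n d)"
    unfolding doubleton_eq_iff by (metis separates_commute_left separates_commute_right)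
next
  assume sep: "separates (ang n a) (ang n b) (ang n c) (ang n d)"
  then have "distinct (map (ang n) [a, b, c, d])"
    by (simp only: list.map separates_distinct)
  then have "distinct [a, b, c, d]"
    by (simp only: distinct_map)
  moreover have "cyc n a c b \<noteq> cyc n a d b"
    using sep by (simp add: separates_def cyc_eq_cycr)
  ultimately show "crosses n {a, b} {c, d}"
    unfolding crosses_def by (intro exI[of _ a] exI[of _ b] exI[of _ c] exI[of _ d]) auto
qed

lemma crosses_distinct: "crosses n {a, b} {c, d} \<Longrightarrow> distinct [a, b, c, d]"
  unfolding crosses_def by (auto simp: doubleton_eq_iff)

lemma crosses_disjoint: "crosses n \<alpha> \<beta> \<Longrightarrow> \<alpha> \<inter> \<beta> = {}"
  unfolding crosses_def by blast

lemma triangulation_is_arc: "triangulation n \<X> \<Longrightarrow> \<alpha> \<in> \<X> \<Longrightarrow> is_arc n \<alpha>"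
  unfolding triangulation_def by blast

lemma triangulation_noncrossing: "triangulation n \<X> \<Longrightarrow> noncrossing n \<X>"
  unfolding triangulation_def by blast

lemma triangulation_maximal:
  "triangulation n \<X> \<Longrightarrow> is_arc n \<alpha> \<Longrightarrow> \<alpha> \<notin> \<X> \<Longrightarrow> \<exists>\<beta>\<in>\<X>. crosses n \<alpha> \<beta>"
  unfolding triangulation_def by blast

lemma noncrossingD: "noncrossing n \<X> \<Longrightarrow> \<alpha> \<in> \<X> \<Longrightarrow> \<beta> \<in> \<X> \<Longrightarrow> \<not> crosses n \<alpha> \<beta>"
  unfolding noncrossing_def by blast

lemma mutation_crosses:
  assumes tX: "triangulation n \<X>" and X: "X \<in> \<X>" and "is_arc n Y" "Y \<noteq> X"
    and tY: "triangulation n (insert Y (\<X> - {X}))"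
  shows "crosses n Y X"
proof -
  have "Y \<notin> \<X>"
  proof
    assume "Y \<in> \<X>"
    then have "X \<notin> insert Y (\<X> - {X})" using \<open>Y \<noteq> X\<close> by blast
    then obtain \<beta> where "\<beta> \<in> insert Y (\<X> - {X})" "crosses n X \<beta>"
      using triangulation_maximal[OF tY triangulation_is_arc[OF tX X]] by blast
    then show False
      using noncrossingD[OF triangulation_noncrossing[OF tX] X] \<open>Y \<in> \<X>\<close> by blast
  qed
  then obtain \<beta> where "\<beta> \<in> \<X>" "crosses n Y \<beta>"
    using triangulation_maximal[OF tX \<open>is_arc n Y\<close>] by blast
  with noncrossingD[OF triangulation_noncrossing[OF tY]] show ?thesis by blast
qed

lemma quadrilateral_side_mem:
  assumes n: "n \<ge> 1" and tX: "triangulation n \<X>" and X: "{x, y} \<in> \<X>"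
    and nc: "noncrossing n (insert {p, q} (\<X> - {{x, y}}))"
    and cr: "crosses n {p, q} {x, y}" and arc: "is_arc n {p, x}"
  shows "{p, x} \<in> \<X>"
proof (rule ccontr)
  assume "{p, x} \<notin> \<X>"
  then obtain \<beta> where \<beta>: "\<beta> \<in> \<X>" "crosses n {p, x} \<beta>"
    using triangulation_maximal[OF tX arc] by blast
  obtain u v where uv: "\<beta> = {u, v}"
    using triangulation_is_arc[OF tX \<beta>(1)] unfolding is_arc_def by blast
  have "separates (ang n x) (ang n y) (ang n u) (ang n v) \<or> separates (ang n p) (ang n q) (ang n u) (ang n v)"
    using separates_transfer cr \<beta>(2) unfolding uv crosses_iff_separates[OF n] by blast
  then have "crosses n {x, y} \<beta> \<or> crosses n {p, q} \<beta>"
    unfolding uv crosses_iff_separates[OF n] .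
  moreover have "\<not> crosses n {x, y} \<beta>"
    using noncrossingD[OF triangulation_noncrossing[OF tX] X \<beta>(1)] .
  moreover have "\<beta> \<in> insert {p, q} (\<X> - {{x, y}})"
    using crosses_disjoint[OF \<beta>(2)] \<beta>(1) by blast
  ultimately show False using noncrossingD[OF nc] by blast
qed

lemma is_arc_from_acc: "is_acc p \<Longrightarrow> p \<noteq> x \<Longrightarrow> valid_pt n p \<Longrightarrow> valid_pt n x \<Longrightarrow> is_arc n {p, x}"
  unfolding is_arc_def neighbours_def
  by (intro exI[of _ p] exI[of _ x]) (cases p; auto)

lemma ext_at_shared_acc:
  assumes n: "n \<ge> 1" and acc: "is_acc p" and dist: "distinct [p, x, y]"
  shows "ext n {p, x} {p, y} \<or> ext n {p, y} {p, x}"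
proof -
  have ext_if_cyc: "ext n {p, c} {p, a}" if "distinct [p, c, a]" "cyc n c a p" for c a
    unfolding ext_def using acc that
    by (intro disjI2 disjI1 conjI exI[of _ p] exI[of _ c] exI[of _ a]) auto
  have "distinct (map (ang n) [p, x, y])"
    using dist inj_ang[OF n] by (simp only: distinct_map) (blast intro: inj_on_subset)
  then have "cyc n x y p \<or> cyc n y x p"
    unfolding cyc_eq_cycr using cycr_total by simp
  then show ?thesis using dist ext_if_cyc by auto
qed

lemma mutation_no_acc_endpoint:
  assumes n: "n \<ge> 1" and tX: "triangulation n \<X>" and X: "X \<in> \<X>"
    and Y: "is_arc n Y" "Y \<noteq> X" and tY: "triangulation n (insert Y (\<X> - {X}))"
    and rig: "rigid n \<X>" and p: "p \<in> Y"
  shows "\<not> is_acc p"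
proof
  assume acc: "is_acc p"
  obtain q where Yq: "Y = {p, q}" and vp: "valid_pt n p"
    using Y(1) p unfolding is_arc_def by blast
  obtain x y where Xxy: "X = {x, y}" and vx: "valid_pt n x" and vy: "valid_pt n y"
    using triangulation_is_arc[OF tX X] unfolding is_arc_def by blast
  have cr: "crosses n {p, q} {x, y}"
    using mutation_crosses[OF tX X Y tY] unfolding Yq Xxy .
  have dist: "distinct [p, q, x, y]"
    using crosses_distinct[OF cr] .
  have nc: "noncrossing n (insert {p, q} (\<X> - {{x, y}}))"
    using triangulation_noncrossing[OF tY] unfolding Yq Xxy .
  have "{p, x} \<in> \<X>"
    using quadrilateral_side_mem[OF n tX X[unfolded Xxy] nc cr is_arc_from_acc[OF acc _ vp vx]] dist
    by simp
  moreover have "{p, y} \<in> \<X>"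
    using quadrilateral_side_mem[of n \<X> y x p q] n tX X nc cr is_arc_from_acc[OF acc _ vp vy] dist
    unfolding Xxy by (simp add: insert_commute)
  ultimately show False
    using ext_at_shared_acc[OF n acc, of x y] dist rig unfolding rigid_def by auto
qed

lemma rigid_subset: "rigid n \<X> \<Longrightarrow> \<Y> \<subseteq> \<X> \<Longrightarrow> rigid n \<Y>"
  unfolding rigid_def by blast

lemma rigid_insert:
  assumes "rigid n \<X>" "noncrossing n (insert Y \<X>)" "Y \<noteq> {}" "\<forall>p\<in>Y. \<not> is_acc p"
  shows "rigid n (insert Y \<X>)"
  unfolding rigid_def
proof (intro ballI)
  fix A C assume A: "A \<in> insert Y \<X>" and C: "C \<in> insert Y \<X>"
  show "\<not> ext n C A"
  proof (cases "A = Y \<or> C = Y")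
    case False
    then show ?thesis using assms(1) A C unfolding rigid_def by blast
  next
    case True
    have "\<not> crosses n A C" using noncrossingD[OF assms(2) A C] .
    moreover have "\<not> is_acc p" if "p \<in> A \<inter> C" for p using True that assms(4) by blast
    moreover have "\<not> (\<forall>x\<in>A. is_acc x)" if "A = C" using True that assms(3,4) by blast
    ultimately show ?thesis unfolding ext_def by blast
  qed
qed

lemma leapfrog_shift:
  assumes lf: "leapfrog n A B I" and J: "J \<in> {UNIV, {..0}, {0..}}"
    and JI: "\<And>i. i \<in> J \<Longrightarrow> i + s \<in> I"
  shows "leapfrog n (\<lambda>i. A (i + s)) (\<lambda>i. B (i + s)) J"
proof -
  let ?A = "\<lambda>i. A (i + s)" and ?B = "\<lambda>i. B (i + s)"
  obtain \<gamma> where arcs: "\<forall>i\<in>I. is_arc n (A i) \<and> is_arc n (B i)"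
    and inj: "inj_on A I" "inj_on B I"
    and disj: "A ` I \<inter> B ` I = {}" and nc: "noncrossing n (A ` I \<union> B ` I)"
    and meet: "\<forall>i\<in>I. A i \<inter> B i \<noteq> {}"
    and prev: "\<forall>i\<in>I. i - 1 \<in> I \<longrightarrow> A i \<inter> B (i - 1) \<noteq> {} \<and> A i \<inter> B (i - 1) \<noteq> A i \<inter> B i"
    and succ: "\<forall>i\<in>I. i + 1 \<in> I \<longrightarrow> B i \<inter> A (i + 1) \<noteq> {} \<and> B i \<inter> A (i + 1) \<noteq> B i \<inter> A i"
    and \<gamma>: "path \<gamma>" "path_image \<gamma> \<subseteq> cball 0 1"
      "\<forall>i\<in>I. curve_crosses n \<gamma> (A i) \<and> curve_crosses n \<gamma> (B i)"
    using lf unfolding leapfrog_def by (elim conjE exE) blast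
  have sub: "?A ` J \<subseteq> A ` I" "?B ` J \<subseteq> B ` I" using JI by auto
  show ?thesis unfolding leapfrog_def
  proof (intro conjI)
    have shift: "(\<lambda>i. i + s) ` J \<subseteq> I" "inj_on (\<lambda>i. i + s) J"
      using JI by (auto simp: inj_on_def)
    show "inj_on ?A J"
      using comp_inj_on[OF shift(2) inj_on_subset[OF inj(1) shift(1)]] by (simp add: o_def)
    show "inj_on ?B J"
      using comp_inj_on[OF shift(2) inj_on_subset[OF inj(2) shift(1)]] by (simp add: o_def)
    show "?A ` J \<inter> ?B ` J = {}" using sub disj by blast
    show "noncrossing n (?A ` J \<union> ?B ` J)"
      using nc sub unfolding noncrossing_def by (meson Un_mono subsetD)
    show "\<forall>i\<in>J. i - 1 \<in> J \<longrightarrow> ?A i \<inter> ?B (i - 1) \<noteq> {} \<and> ?A i \<inter> ?B (i - 1) \<noteq> ?A i \<inter> ?B i"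
    proof (intro ballI impI)
      fix i assume "i \<in> J" "i - 1 \<in> J"
      then show "?A i \<inter> ?B (i - 1) \<noteq> {} \<and> ?A i \<inter> ?B (i - 1) \<noteq> ?A i \<inter> ?B i"
        using prev[rule_format, of "i + s"] JI[of i] JI[of "i - 1"] by (simp add: algebra_simps)
    qed
    show "\<forall>i\<in>J. i + 1 \<in> J \<longrightarrow> ?B i \<inter> ?A (i + 1) \<noteq> {} \<and> ?B i \<inter> ?A (i + 1) \<noteq> ?B i \<inter> ?A i"
    proof (intro ballI impI)
      fix i assume "i \<in> J" "i + 1 \<in> J"
      then show "?B i \<inter> ?A (i + 1) \<noteq> {} \<and> ?B i \<inter> ?A (i + 1) \<noteq> ?B i \<inter> ?A i"
        using succ[rule_format, of "i + s"] JI[of i] JI[of "i + 1"] by (simp add: algebra_simps)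
    qed
    show "\<exists>\<gamma>. path \<gamma> \<and> path_image \<gamma> \<subseteq> cball 0 1
            \<and> (\<forall>i\<in>J. curve_crosses n \<gamma> (?A i) \<and> curve_crosses n \<gamma> (?B i))"
      using \<gamma> JI by blast
  qed (use J arcs meet JI in auto)
qed

lemma leapfrog_avoid:
  assumes lf: "leapfrog n A B I"
  obtains A' B' J where "leapfrog n A' B' J" "A' ` J \<union> B' ` J \<subseteq> A ` I \<union> B ` I - {Y}"
proof (cases "Y \<in> A ` I \<union> B ` I")
  case False
  then show ?thesis using that lf by blast
next
  case True
  then obtain i0 where i0: "i0 \<in> I" "Y = A i0 \<or> Y = B i0" by blast
  have I: "I \<in> {UNIV, {..0}, {0..}}" and inj: "inj_on A I" "inj_on B I"
    and disj: "A ` I \<inter> B ` I = {}"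
    using lf unfolding leapfrog_def by blast+
  \<comment> \<open>The arcs of a leapfrog are pairwise distinct, so the tail beyond i0 avoids Y.\<close>
  obtain J s where J: "J \<in> {UNIV, {..0}, {0..}}" and JI: "\<And>i. i \<in> J \<Longrightarrow> i + s \<in> I \<and> i + s \<noteq> i0"
  proof (cases "I = {..0}")
    case True
    show ?thesis by (rule that[of "{..0}" "i0 - 1"]) (use True i0 in auto)
  next
    case False
    then have "I = UNIV \<or> I = {0..}" using I by blast
    then show ?thesis by (intro that[of "{0..}" "i0 + 1"]) (use i0 in auto)
  qed
  have "leapfrog n (\<lambda>i. A (i + s)) (\<lambda>i. B (i + s)) J"
    using leapfrog_shift[OF lf J] JI by blast
  moreover have "Y \<notin> (\<lambda>i. A (i + s)) ` J \<union> (\<lambda>i. B (i + s)) ` J"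
  proof
    assume "Y \<in> (\<lambda>i. A (i + s)) ` J \<union> (\<lambda>i. B (i + s)) ` J"
    then obtain i where "i \<in> J" "Y = A (i + s) \<or> Y = B (i + s)" by blast
    with JI[OF \<open>i \<in> J\<close>] i0 inj disj show False unfolding inj_on_def by blast
  qed
  moreover have "(\<lambda>i. A (i + s)) ` J \<union> (\<lambda>i. B (i + s)) ` J \<subseteq> A ` I \<union> B ` I"
    using JI by blast
  ultimately show ?thesis by (metis Diff_empty subset_Diff_insert that)
qed

lemma fan_triangulation_if_almost_subset:
  assumes fan: "fan_triangulation n \<X>" and tY: "triangulation n \<Y>" and sub: "\<Y> - {Y} \<subseteq> \<X>"
  shows "fan_triangulation n \<Y>"
  unfolding fan_triangulation_def
proof (intro conjI notI)
  assume "\<exists>A B I. leapfrog n A B I \<and> A ` I \<union> B ` I \<subseteq> \<Y>"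
  then obtain A B I where lf: "leapfrog n A B I" and "A ` I \<union> B ` I \<subseteq> \<Y>" by blast
  obtain A' B' J where lf': "leapfrog n A' B' J" and "A' ` J \<union> B' ` J \<subseteq> A ` I \<union> B ` I - {Y}"
    by (rule leapfrog_avoid[OF lf])
  then have "A' ` J \<union> B' ` J \<subseteq> \<X>"
    using \<open>A ` I \<union> B ` I \<subseteq> \<Y>\<close> sub by (meson Diff_mono order.trans order_refl)
  then have "\<exists>A B I. leapfrog n A B I \<and> A ` I \<union> B ` I \<subseteq> \<X>"
    using lf' by blast
  moreover have "\<not> (\<exists>A B I. leapfrog n A B I \<and> A ` I \<union> B ` I \<subseteq> \<X>)"
    using fan unfolding fan_triangulation_def by (rule conjunct2)
  ultimately show False by contradiction
qed (fact tY)

theorem mainTheorem9: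
  fixes n :: nat and \<X> \<Y> :: "mpt set set" and X Y :: "mpt set"
  assumes "n \<ge> 1"
    and "triangulation n \<X>"
    and "X \<in> \<X>"
    and "is_arc n Y" and "Y \<noteq> X"
    and "\<Y> = (\<X> - {X}) \<union> {Y}"
    and "triangulation n \<Y>"
    and "\<exists>!Y'. is_arc n Y' \<and> Y' \<noteq> X \<and> triangulation n ((\<X> - {X}) \<union> {Y'})"
  shows "(rigid n \<X> \<longrightarrow> rigid n \<Y>) \<and> (fan_triangulation n \<X> \<longrightarrow> fan_triangulation n \<Y>)"
proof -
  have \<Y>: "\<Y> = insert Y (\<X> - {X})" using assms(6) by simp
  have tY: "triangulation n (insert Y (\<X> - {X}))" using assms(7) unfolding \<Y> .
  show ?thesis
  proof (intro conjI impI)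
    assume rig: "rigid n \<X>"
    have "\<forall>p\<in>Y. \<not> is_acc p"
      using mutation_no_acc_endpoint[OF assms(1-5) tY rig] by blast
    moreover have "Y \<noteq> {}" using assms(4) unfolding is_arc_def by blast
    ultimately show "rigid n \<Y>"
      unfolding \<Y> using rigid_insert rigid_subset[OF rig] triangulation_noncrossing[OF tY] by blast
  next
    assume "fan_triangulation n \<X>"
    then show "fan_triangulation n \<Y>"
      using fan_triangulation_if_almost_subset assms(6,7) by blast
  qed
qed

end
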